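(* If $m_1-m_2\le2$, then for every $\beta\in(0,1)^4$ the set $\mathrm{QPH}^s_\beta(E)$ of $\beta$-stable points of $\mathrm{QPH}(E)$ is a nonempty Zariski open subset containing $\mathrm{QPH}_{\mathbb C^*}(E)$. If $m_1-m_2\ge4$, then $\mathrm{QPH}^s_\beta(E)=\emptyset$ for every $\beta\in[0,1)^4$.
   Context: Fix $z_1\in\mathbb{CP}^1\setminus\{0,1,\infty\}$, set $z_2=0$, $z_3=1$, $z_4=\infty$, $D=z_1+\dots+z_4$. Let $E\to\mathbb{CP}^1$ be a rank 2 holomorphic bundle of degree $d$, $E\cong\mathcal O(m_1)\oplus\mathcal O(m_2)$, $m_1\ge m_2$. $\mathrm{QPH}(E)$ is the space of tuples $(F_1,\dots,F_4,\Phi)$ where $F_i\subset E|_{z_i}$ are lines and $\Phi\in H^0(\mathrm{End}(E)\otimes K_{\mathbb{CP}^1}(D))$ has nilpotent residues $\mathrm{Res}_{z_i}\Phi$ with $F_i\subset\ker\mathrm{Res}_{z_i}\Phi$. $\mathrm{QPH}_{\mathbb C^*}(E)$ is the subset where $\det\Phi\ne0$. For $\beta\in[0,1)^4$ and $I\subset\{1,2,3,4\}$ put $\beta_I=\sum_{i\in I}\beta_i-\sum_{j\notin I}\beta_j$; for a line subbundle $L\subset E$ put $I_L=\{i:L|_{z_i}=F_i\}$. The point is $\beta$-stable if for every line subbundle $L$ with $\Phi(L)\subset L\otimes K_{\mathbb{CP}^1}(D)$ one has $\beta_{I_L}<d-2\deg L$. *)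

theory Defs
  imports Complex_Main "HOL-Computational_Algebra.Polynomial"
begin

text \<open>Points: index 1 = z1, 2 = 0, 3 = 1, 4 = infinity.
E = O(m1) + O(m2) with standard frames e1,e2 on C and frames z^m1 e1, z^m2 e2 near infinity.
K(D) is trivialised on C by omega = dz/(z(z-1)(z-z1)); a Higgs field is
Phi = A(z) omega with A a 2x2 matrix of polynomials, deg A_ab \<le> m_a - m_b + 2.
Fibres of E are identified with C^2 via these frames; a line F_i is the span of a
nonzero vector.\<close>

record qdat =
  qF1 :: "complex \<times> complex"
  qF2 :: "complex \<times> complex"
  qF3 :: "complex \<times> complex"
  qF4 :: "complex \<times> complex"
  qA11 :: "complex poly"
  qA12 :: "complex poly"
  qA21 :: "complex poly"
  qA22 :: "complex poly"

definition Fv :: "qdat \<Rightarrow> nat \<Rightarrow> complex \<times> complex" where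
  "Fv x i = (if i = 1 then qF1 x else if i = 2 then qF2 x else if i = 3 then qF3 x
             else if i = 4 then qF4 x else (0, 0))"

definition Aent :: "qdat \<Rightarrow> nat \<Rightarrow> nat \<Rightarrow> complex poly" where
  "Aent x a b = (if a = 1 \<and> b = 1 then qA11 x else if a = 1 \<and> b = 2 then qA12 x
                 else if a = 2 \<and> b = 1 then qA21 x else if a = 2 \<and> b = 2 then qA22 x else 0)"

definition mdeg :: "int \<Rightarrow> int \<Rightarrow> nat \<Rightarrow> int" where
  "mdeg m1 m2 a = (if a = 1 then m1 else m2)"

definition polyle :: "complex poly \<Rightarrow> int \<Rightarrow> bool" where
  "polyle p n \<longleftrightarrow> p = 0 \<or> int (degree p) \<le> n"

definition topco :: "complex poly \<Rightarrow> int \<Rightarrow> complex" where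
  "topco p n = (if n < 0 then 0 else coeff p (nat n))"

definition pt :: "complex \<Rightarrow> nat \<Rightarrow> complex" where
  "pt z1 i = (if i = 1 then z1 else if i = 2 then 0 else 1)"

type_synonym mat2 = "nat \<Rightarrow> nat \<Rightarrow> complex"

definition mmul :: "mat2 \<Rightarrow> mat2 \<Rightarrow> mat2" where
  "mmul M N = (\<lambda>i j. \<Sum>k\<in>{1,2}. M i k * N k j)"

primrec mpow :: "mat2 \<Rightarrow> nat \<Rightarrow> mat2" where
  "mpow M 0 = (\<lambda>i j. if i = j then 1 else 0)"
| "mpow M (Suc n) = mmul M (mpow M n)"

definition nilpotent2 :: "mat2 \<Rightarrow> bool" where
  "nilpotent2 M \<longleftrightarrow> (\<exists>k. \<forall>i\<in>{1,2}. \<forall>j\<in>{1,2}. mpow M k i j = 0)"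

definition mapply :: "mat2 \<Rightarrow> complex \<times> complex \<Rightarrow> complex \<times> complex" where
  "mapply M v = (M 1 1 * fst v + M 1 2 * snd v, M 2 1 * fst v + M 2 2 * snd v)"

definition line_of :: "complex \<times> complex \<Rightarrow> (complex \<times> complex) set" where
  "line_of v = {(c * fst v, c * snd v) | c. True}"

definition resid :: "complex \<Rightarrow> int \<Rightarrow> int \<Rightarrow> qdat \<Rightarrow> nat \<Rightarrow> mat2" where
  "resid z1 m1 m2 x i =
     (if i = 4 then (\<lambda>a b. - topco (Aent x a b) (mdeg m1 m2 a - mdeg m1 m2 b + 2))
      else (\<lambda>a b. poly (Aent x a b) (pt z1 i) /
                   (\<Prod>q\<in>{1,2,3} - {i}. (pt z1 i - pt z1 q))))"

definition QPH :: "complex \<Rightarrow> int \<Rightarrow> int \<Rightarrow> qdat set" where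
  "QPH z1 m1 m2 = {x.
     (\<forall>i\<in>{1..4}. Fv x i \<noteq> (0, 0)) \<and>
     (\<forall>a\<in>{1,2}. \<forall>b\<in>{1,2}. polyle (Aent x a b) (mdeg m1 m2 a - mdeg m1 m2 b + 2)) \<and>
     (\<forall>i\<in>{1..4}. nilpotent2 (resid z1 m1 m2 x i) \<and>
        (\<forall>w\<in>line_of (Fv x i). mapply (resid z1 m1 m2 x i) w = (0, 0)))}"

definition QPH_Cstar :: "complex \<Rightarrow> int \<Rightarrow> int \<Rightarrow> qdat set" where
  "QPH_Cstar z1 m1 m2 = {x \<in> QPH z1 m1 m2. qA11 x * qA22 x - qA12 x * qA21 x \<noteq> 0}"

text \<open>Line subbundle L = O(k) of E given by (s1,s2), s_i a section of O(m_i - k),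
without common zeros on CP^1.\<close>
definition lsub :: "int \<Rightarrow> int \<Rightarrow> int \<Rightarrow> complex poly \<Rightarrow> complex poly \<Rightarrow> bool" where
  "lsub m1 m2 k s1 s2 \<longleftrightarrow> polyle s1 (m1 - k) \<and> polyle s2 (m2 - k) \<and>
     (\<forall>z. \<not> (poly s1 z = 0 \<and> poly s2 z = 0)) \<and>
     \<not> (topco s1 (m1 - k) = 0 \<and> topco s2 (m2 - k) = 0)"

definition Lfib :: "complex \<Rightarrow> int \<Rightarrow> int \<Rightarrow> int \<Rightarrow> complex poly \<Rightarrow> complex poly \<Rightarrow> nat \<Rightarrow> complex \<times> complex" where
  "Lfib z1 m1 m2 k s1 s2 i = (if i = 4 then (topco s1 (m1 - k), topco s2 (m2 - k))
                               else (poly s1 (pt z1 i), poly s2 (pt z1 i)))"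

definition Phi_inv :: "qdat \<Rightarrow> complex poly \<Rightarrow> complex poly \<Rightarrow> bool" where
  "Phi_inv x s1 s2 \<longleftrightarrow> (\<forall>z. mapply (\<lambda>a b. poly (Aent x a b) z) (poly s1 z, poly s2 z)
                                \<in> line_of (poly s1 z, poly s2 z))"

definition I_L :: "complex \<Rightarrow> int \<Rightarrow> int \<Rightarrow> qdat \<Rightarrow> int \<Rightarrow> complex poly \<Rightarrow> complex poly \<Rightarrow> nat set" where
  "I_L z1 m1 m2 x k s1 s2 = {i\<in>{1..4}. line_of (Lfib z1 m1 m2 k s1 s2 i) = line_of (Fv x i)}"

definition betaI :: "(nat \<Rightarrow> real) \<Rightarrow> nat set \<Rightarrow> real" where
  "betaI \<beta> I = (\<Sum>i\<in>I. \<beta> i) - (\<Sum>j\<in>{1..4} - I. \<beta> j)"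

definition beta_stable :: "complex \<Rightarrow> int \<Rightarrow> int \<Rightarrow> (nat \<Rightarrow> real) \<Rightarrow> qdat \<Rightarrow> bool" where
  "beta_stable z1 m1 m2 \<beta> x \<longleftrightarrow>
     (\<forall>k s1 s2. lsub m1 m2 k s1 s2 \<and> Phi_inv x s1 s2 \<longrightarrow>
        betaI \<beta> (I_L z1 m1 m2 x k s1 s2) < real_of_int (m1 + m2 - 2 * k))"

definition QPH_stable :: "complex \<Rightarrow> int \<Rightarrow> int \<Rightarrow> (nat \<Rightarrow> real) \<Rightarrow> qdat set" where
  "QPH_stable z1 m1 m2 \<beta> = {x \<in> QPH z1 m1 m2. beta_stable z1 m1 m2 \<beta> x}"

text \<open>Polynomial functions in the coordinates (vectors spanning F_i, coefficients of A).\<close>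
inductive_set zpoly :: "(qdat \<Rightarrow> complex) set" where
  zconst: "(\<lambda>_. c) \<in> zpoly"
| zF1: "(\<lambda>x. fst (Fv x i)) \<in> zpoly"
| zF2: "(\<lambda>x. snd (Fv x i)) \<in> zpoly"
| zA: "(\<lambda>x. coeff (Aent x a b) n) \<in> zpoly"
| zadd: "f \<in> zpoly \<Longrightarrow> g \<in> zpoly \<Longrightarrow> (\<lambda>x. f x + g x) \<in> zpoly"
| zmul: "f \<in> zpoly \<Longrightarrow> g \<in> zpoly \<Longrightarrow> (\<lambda>x. f x * g x) \<in> zpoly"

definition zariski_open_in :: "qdat set \<Rightarrow> qdat set \<Rightarrow> bool" where
  "zariski_open_in X S \<longleftrightarrow> S \<subseteq> X \<and>
     (\<exists>Fs \<subseteq> zpoly. X - S = {x \<in> X. \<forall>f\<in>Fs. f x = 0})"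

end

(* An invariant line subbundle L = O(k) of E is an eigenline A s = l s of the Higgs field
   Phi = A omega; the eigenvalue l is a polynomial of degree at most 2 which vanishes at the three
   finite marked points, where the residues are nilpotent, so Phi kills L.  Hence points with
   det Phi <> 0 have no invariant line subbundles and are stable, and for m1 - m2 >= 4 the entry
   A21 vanishes, so that O(m1) is an invariant subbundle violating every stability condition.
   For openness, instability means the existence of a nonzero section of E(-k), m1 - 2 <= k <= m1,
   killed by Phi and lying in F_i at z_i for all i in a set I with beta_I >= d - 2k: saturating such
   a section to a subbundle loses at most as much in beta_I as it gains in degree.  For each of the
   finitely many pairs (k, I) this is a linear system with polynomial coefficients, and a nontrivial
   kernel is cut out by the vanishing of a Gram determinant.  Nonemptiness comes from explicit
   points of QPH_C*. *)

theory Submission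
  imports Defs "Jordan_Normal_Form.Determinant"
    "HOL-Computational_Algebra.Fundamental_Theorem_Algebra"
    "HOL-Computational_Algebra.Field_as_Ring" "HOL-Computational_Algebra.Polynomial_Factorial"
begin

definition det2 :: "complex \<times> complex \<Rightarrow> complex \<times> complex \<Rightarrow> complex" where
  "det2 u v = fst u * snd v - snd u * fst v"

lemma det2_scale_left: "det2 (c * fst u, c * snd u) v = c * det2 u v"
  by (simp add: det2_def algebra_simps)

lemma mem_line_of_iff: "w \<in> line_of v \<longleftrightarrow> (\<exists>c. w = (c * fst v, c * snd v))"
  by (simp add: line_of_def)

lemma det2_eq_0_if_line_of_eq:
  assumes "line_of u = line_of v"
  shows "det2 u v = 0"
proof -
  have "u \<in> line_of u" unfolding mem_line_of_iff by (intro exI[of _ 1]) simp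
  then have "u \<in> line_of v" using assms by simp
  then obtain c where "u = (c * fst v, c * snd v)" unfolding mem_line_of_iff by blast
  then show ?thesis by (simp add: det2_def)
qed

lemma line_of_scale:
  assumes "c \<noteq> 0"
  shows "line_of (c * fst v, c * snd v) = line_of v"
proof
  show "line_of (c * fst v, c * snd v) \<subseteq> line_of v"
  proof
    fix w
    assume "w \<in> line_of (c * fst v, c * snd v)"
    then obtain d where "w = (d * (c * fst v), d * (c * snd v))" unfolding mem_line_of_iff by auto
    then show "w \<in> line_of v" unfolding mem_line_of_iff by (intro exI[of _ "d * c"]) simp
  qed
  show "line_of v \<subseteq> line_of (c * fst v, c * snd v)"
  proof
    fix w
    assume "w \<in> line_of v"
    then obtain d where "w = (d * fst v, d * snd v)" unfolding mem_line_of_iff by auto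
    then show "w \<in> line_of (c * fst v, c * snd v)"
      unfolding mem_line_of_iff using assms by (intro exI[of _ "d / c"]) simp
  qed
qed

lemma line_of_eq_if_det2_eq_0:
  assumes "u \<noteq> (0, 0)" "v \<noteq> (0, 0)" "det2 u v = 0"
  shows "line_of u = line_of v"
proof -
  obtain u1 u2 v1 v2 where uv: "u = (u1, u2)" "v = (v1, v2)" by force
  have d: "u1 * v2 = u2 * v1" using assms(3) by (simp add: uv det2_def)
  obtain c where "c \<noteq> 0" "u = (c * fst v, c * snd v)"
  proof (cases "v1 = 0")
    case True
    then have "v2 \<noteq> 0" "u1 = 0" using assms(2) d by (auto simp: uv)
    then show ?thesis using that[of "u2 / v2"] assms(1) True by (simp add: uv)
  next
    case False
    then have "u2 = u1 / v1 * v2" using d by (simp add: field_simps)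
    moreover have "u1 \<noteq> 0" using assms(1) \<open>u2 = u1 / v1 * v2\<close> by (auto simp: uv)
    ultimately show ?thesis using that[of "u1 / v1"] False by (simp add: uv)
  qed
  then show ?thesis using line_of_scale by simp
qed

lemma mapply_mmul: "mapply (mmul M N) v = mapply M (mapply N v)"
  by (simp add: mapply_def mmul_def distrib_left distrib_right mult.assoc)

lemma mapply_mpow_eigenvector:
  assumes "mapply M v = (\<mu> * fst v, \<mu> * snd v)"
  shows "mapply (mpow M k) v = (\<mu> ^ k * fst v, \<mu> ^ k * snd v)"
proof (induction k)
  case 0
  then show ?case by (simp add: mapply_def)
next
  case (Suc k)
  have "mapply M (a * fst v, a * snd v) = (a * fst (mapply M v), a * snd (mapply M v))" for a
    by (simp add: mapply_def algebra_simps)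
  then show ?case using Suc assms by (simp add: mapply_mmul)
qed

lemma nilpotent2_eigenvalue_eq_0:
  assumes "nilpotent2 M" "mapply M v = (\<mu> * fst v, \<mu> * snd v)" "v \<noteq> (0, 0)"
  shows "\<mu> = 0"
proof -
  obtain k where "\<forall>i\<in>{1,2}. \<forall>j\<in>{1,2}. mpow M k i j = 0"
    using assms(1) nilpotent2_def by blast
  then have "mapply (mpow M k) v = (0, 0)" by (simp add: mapply_def)
  then have "\<mu> ^ k * fst v = 0 \<and> \<mu> ^ k * snd v = 0"
    using mapply_mpow_eigenvector[OF assms(2)] by simp
  then show ?thesis using assms(3) by (cases v) auto
qed

lemma nilpotent_kernel_if_strictly_upper:
  "M 1 1 = 0 \<Longrightarrow> M 2 2 = 0 \<Longrightarrow> M 2 1 = 0 \<Longrightarrow>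
     nilpotent2 M \<and> (\<forall>w\<in>line_of (1, 0). mapply M w = (0, 0))"
  unfolding nilpotent2_def
  by (intro conjI exI[of _ 2]) (auto simp: numeral_2_eq_2 mmul_def mapply_def line_of_def)

lemma nilpotent_kernel_if_strictly_lower:
  "M 1 1 = 0 \<Longrightarrow> M 2 2 = 0 \<Longrightarrow> M 1 2 = 0 \<Longrightarrow>
     nilpotent2 M \<and> (\<forall>w\<in>line_of (0, 1). mapply M w = (0, 0))"
  unfolding nilpotent2_def
  by (intro conjI exI[of _ 2]) (auto simp: numeral_2_eq_2 mmul_def mapply_def line_of_def)

lemma polyle_0 [simp]: "polyle 0 e"
  by (simp add: polyle_def)

lemma polyle_mono: "polyle p a \<Longrightarrow> a \<le> b \<Longrightarrow> polyle p b"
  unfolding polyle_def by auto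

lemma polyle_neg_eq_0: "polyle p e \<Longrightarrow> e < 0 \<Longrightarrow> p = 0"
  unfolding polyle_def by auto

lemma polyle_add: "polyle p e \<Longrightarrow> polyle q e \<Longrightarrow> polyle (p + q) e"
  unfolding polyle_def
proof (elim disjE, simp_all)
  assume "int (degree p) \<le> e" "int (degree q) \<le> e"
  moreover have "degree (p + q) \<le> max (degree p) (degree q)" by (rule degree_add_le_max)
  ultimately show "p + q = 0 \<or> int (degree (p + q)) \<le> e" by linarith
qed

lemma polyle_mult: "polyle p a \<Longrightarrow> polyle q b \<Longrightarrow> polyle (p * q) (a + b)"
  unfolding polyle_def
proof (elim disjE, simp_all)
  assume "int (degree p) \<le> a" "int (degree q) \<le> b"
  moreover have "degree (p * q) \<le> degree p + degree q" by (rule degree_mult_le)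
  ultimately show "p = 0 \<or> q = 0 \<or> int (degree (p * q)) \<le> a + b" by linarith
qed

lemma polyle_mult_iff_degree:
  assumes "g \<noteq> 0" "p \<noteq> 0"
  shows "polyle (g * p) e \<longleftrightarrow> int (degree g) + int (degree p) \<le> e"
  using assms by (simp add: polyle_def degree_mult_eq)

lemma polyle_eq_0_iff_coeffs:
  assumes "polyle p e"
  shows "p = 0 \<longleftrightarrow> (\<forall>n\<le>nat e. coeff p n = 0)"
proof
  assume coeffs: "\<forall>n\<le>nat e. coeff p n = 0"
  show "p = 0"
  proof (rule ccontr)
    assume "p \<noteq> 0"
    then have "degree p \<le> nat e" using assms by (simp add: polyle_def)
    then have "coeff p (degree p) = 0" using coeffs by blast
    then show False using \<open>p \<noteq> 0\<close> by simp
  qed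
qed simp

lemma coeff_eq_0_if_polyle: "polyle p e \<Longrightarrow> e < int n \<Longrightarrow> coeff p n = 0"
  unfolding polyle_def by (auto intro: coeff_eq_0)

lemma polyle_if_coeffs_vanish:
  assumes "\<And>n. e < int n \<Longrightarrow> coeff p n = 0"
  shows "polyle p e"
proof (cases "p = 0")
  case False
  then have "coeff p (degree p) \<noteq> 0" by simp
  then have "\<not> e < int (degree p)" using assms by blast
  then show ?thesis by (simp add: polyle_def)
qed simp

lemma topco_add: "topco (p + q) e = topco p e + topco q e"
  by (simp add: topco_def)

lemma topco_smult: "topco (Polynomial.smult a p) e = a * topco p e"
  by (simp add: topco_def)

lemma topco_mult:
  assumes "polyle q e" "p \<noteq> 0"
  shows "topco (p * q) (int (degree p) + e) = lead_coeff p * topco q e"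
proof (cases "e < 0 \<or> q = 0")
  case True
  then show ?thesis using polyle_neg_eq_0[OF assms(1)] by (auto simp: topco_def)
next
  case False
  then have dq: "degree q \<le> nat e" and e: "nat (int (degree p) + e) = degree p + nat e"
    using assms(1) by (auto simp: polyle_def)
  show ?thesis
  proof (cases "degree q = nat e")
    case True
    then show ?thesis using False e coeff_mult_degree_sum[of p q] by (simp add: topco_def)
  next
    case lt: False
    have "coeff (p * q) (degree p + nat e) = 0"
      using degree_mult_le[of p q] dq lt by (intro coeff_eq_0) linarith
    moreover have "coeff q (nat e) = 0" using dq lt by (simp add: coeff_eq_0)
    ultimately show ?thesis using False e by (simp add: topco_def)
  qed
qed

lemma polyle_cancel_topco:
  assumes "polyle (l * s) (e + d)" "topco s e \<noteq> 0"
  shows "polyle l d"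
proof (cases "l = 0")
  case False
  have "0 \<le> e" "coeff s (nat e) \<noteq> 0" using assms(2) by (auto simp: topco_def split: if_splits)
  then have "s \<noteq> 0" "nat e \<le> degree s" by (auto intro: le_degree)
  then show ?thesis using assms(1) False \<open>0 \<le> e\<close> by (simp add: polyle_def degree_mult_eq)
qed simp

lemma card_roots_le_degree:
  fixes p :: "'a::idom poly"
  assumes "p \<noteq> 0" "\<And>z. z \<in> S \<Longrightarrow> poly p z = 0"
  shows "card S \<le> degree p"
proof -
  have "card S \<le> card {z. poly p z = 0}"
    using assms poly_roots_finite[OF assms(1)] by (intro card_mono) auto
  also have "\<dots> \<le> degree p" by (rule card_poly_roots_bound[OF assms(1)])
  finally show ?thesis .
qed

lemma coprime_if_no_common_root:
  fixes p q :: "complex poly"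
  assumes "\<And>z. poly p z = 0 \<Longrightarrow> poly q z \<noteq> 0"
  shows "coprime p q"
proof -
  let ?g = "gcd p q"
  have "\<not> constant (poly ?g)" if "degree ?g \<noteq> 0" using that by (simp add: constant_degree)
  moreover have "poly ?g z \<noteq> 0" for z
    using assms by (metis dvdE gcd_dvd1 gcd_dvd2 mult_zero_left poly_mult)
  ultimately have "degree ?g = 0" using fundamental_theorem_of_algebra by blast
  moreover have "?g \<noteq> 0" using assms by force
  ultimately show ?thesis using is_unit_gcd is_unit_iff_degree by blast
qed

lemma common_factor_decomposition:
  fixes p q :: "'a::field_gcd poly"
  assumes "p \<noteq> 0 \<or> q \<noteq> 0"
  obtains g p' q' where "g \<noteq> 0" "p = g * p'" "q = g * q'"
    "\<And>z. poly p' z = 0 \<Longrightarrow> poly q' z \<noteq> 0"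
proof
  let ?g = "gcd p q"
  show "?g \<noteq> 0" "p = ?g * (p div ?g)" "q = ?g * (q div ?g)"
    using assms by simp_all
  fix z
  assume p': "poly (p div ?g) z = 0"
  show "poly (q div ?g) z \<noteq> 0"
  proof
    assume "poly (q div ?g) z = 0"
    then have "[:-z, 1:] dvd p div ?g" "[:-z, 1:] dvd q div ?g"
      using p' by (simp_all add: poly_eq_0_iff_dvd)
    then have "is_unit [:-z, 1:]" using coprime_common_divisor[OF div_gcd_coprime[OF assms]] by blast
    then show False by (simp add: is_unit_iff_degree)
  qed
qed

lemma coprime_proportional_factor:
  fixes s1 s2 u1 u2 :: "'a::field_gcd poly"
  assumes "coprime s1 s2" "u1 * s2 = u2 * s1"
  obtains l where "u1 = l * s1" "u2 = l * s2"
proof -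
  obtain a b where ab: "a * s1 + b * s2 = 1"
    using bezout_coefficients_fst_snd[of s1 s2] assms(1) by (metis coprime_imp_gcd_eq_1)
  have "u1 = u1 * (a * s1 + b * s2)" "u2 = u2 * (a * s1 + b * s2)" using ab by simp_all
  then have "u1 = (a * u1 + b * u2) * s1" "u2 = (a * u1 + b * u2) * s2"
    using assms(2) by (simp_all add: algebra_simps)
  then show ?thesis by (rule that)
qed

lemma zpoly_diff: "f \<in> zpoly \<Longrightarrow> g \<in> zpoly \<Longrightarrow> (\<lambda>y. f y - g y) \<in> zpoly"
  using zadd[OF _ zmul[OF zconst[of "-1"]], of f g] by simp

lemma zpoly_sum: "finite S \<Longrightarrow> (\<And>i. i \<in> S \<Longrightarrow> f i \<in> zpoly) \<Longrightarrow> (\<lambda>y. \<Sum>i\<in>S. f i y) \<in> zpoly"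
  by (induction S rule: finite_induct) (auto intro: zpoly.intros)

lemma zpoly_prod: "finite S \<Longrightarrow> (\<And>i. i \<in> S \<Longrightarrow> f i \<in> zpoly) \<Longrightarrow> (\<lambda>y. \<Prod>i\<in>S. f i y) \<in> zpoly"
  by (induction S rule: finite_induct) (auto intro: zpoly.intros)

lemma zpoly_det:
  assumes "\<And>i j. i < n \<Longrightarrow> j < n \<Longrightarrow> f i j \<in> zpoly"
  shows "(\<lambda>y. det (mat n n (\<lambda>(i, j). f i j y))) \<in> zpoly"
proof -
  have "det (mat n n (\<lambda>(i, j). f i j y)) =
      (\<Sum>p\<in>{p. p permutes {0..<n}}. signof p * (\<Prod>i = 0..<n. f i (p i) y))" for y
    unfolding det_def'[OF mat_carrier]
    by (intro sum.cong refl arg_cong2[where f = "(*)"] prod.cong) (auto dest: permutes_in_image)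
  moreover have "(\<lambda>y. \<Sum>p\<in>{p. p permutes {0..<n}}. signof p * (\<Prod>i = 0..<n. f i (p i) y)) \<in> zpoly"
    by (intro zpoly_sum zmul[OF zconst] zpoly_prod assms)
      (auto simp: finite_permutations dest: permutes_in_image)
  ultimately show ?thesis by simp
qed

definition gram :: "('r \<Rightarrow> nat \<Rightarrow> complex) \<Rightarrow> ('r \<Rightarrow> nat \<Rightarrow> complex) \<Rightarrow> 'r set \<Rightarrow> nat \<Rightarrow> complex mat" where
  "gram E F R N = mat N N (\<lambda>(a, b). \<Sum>r\<in>R. cnj (E r a) * F r b)"

lemma gram_carrier: "gram E F R N \<in> carrier_mat N N"
  by (simp add: gram_def)

lemma gram_mult_vec:
  assumes "a < N"
  shows "(gram E F R N *\<^sub>v vec N c) $ a = (\<Sum>r\<in>R. cnj (E r a) * (\<Sum>b<N. F r b * c b))"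
proof -
  have "(gram E F R N *\<^sub>v vec N c) $ a = (\<Sum>b<N. (\<Sum>r\<in>R. cnj (E r a) * F r b) * c b)"
    using assms by (simp add: gram_def scalar_prod_def atLeast0LessThan)
  also have "\<dots> = (\<Sum>r\<in>R. cnj (E r a) * (\<Sum>b<N. F r b * c b))"
    unfolding sum_distrib_left sum_distrib_right by (subst sum.swap) (simp add: mult.assoc)
  finally show ?thesis .
qed

lemma det_gram_eq_0:
  assumes "\<exists>b<N. c b \<noteq> 0" "\<forall>r\<in>R. (\<Sum>b<N. F r b * c b) = 0"
  shows "det (gram E F R N) = 0"
proof -
  have "gram E F R N *\<^sub>v vec N c = 0\<^sub>v N"
  proof (rule eq_vecI)
    show "dim_vec (gram E F R N *\<^sub>v vec N c) = dim_vec (0\<^sub>v N)" by (simp add: gram_def)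
    fix a assume "a < dim_vec (0\<^sub>v N)"
    then show "(gram E F R N *\<^sub>v vec N c) $ a = 0\<^sub>v N $ a" using assms(2) by (simp add: gram_mult_vec)
  qed
  moreover have "vec N c \<noteq> 0\<^sub>v N" using assms(1) by (auto simp: vec_eq_iff)
  ultimately show ?thesis unfolding det_0_iff_vec_prod_zero[OF gram_carrier] using vec_carrier by blast
qed

text \<open>If \<open>E\<^sup>* E c = 0\<close> then \<open>|E c|\<^sup>2 = c\<^sup>* E\<^sup>* E c = 0\<close>.\<close>
lemma det_gram_self_neq_0:
  assumes R: "finite R" and inj: "\<And>c. \<forall>r\<in>R. (\<Sum>b<N. E r b * c b) = 0 \<Longrightarrow> \<forall>b<N. c b = 0"
  shows "det (gram E E R N) \<noteq> 0"
proof
  assume "det (gram E E R N) = 0"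
  then obtain v where v: "v \<in> carrier_vec N" "v \<noteq> 0\<^sub>v N" "gram E E R N *\<^sub>v v = 0\<^sub>v N"
    using det_0_iff_vec_prod_zero[OF gram_carrier] by blast
  define c where "c b = v $ b" for b
  define w where "w r = (\<Sum>b<N. E r b * c b)" for r
  have vc: "v = vec N c" using v(1) by (auto simp: c_def)
  have "(\<Sum>r\<in>R. cnj (w r) * w r) = (\<Sum>r\<in>R. \<Sum>a<N. cnj (E r a) * cnj (c a) * w r)"
    by (simp add: w_def sum_distrib_right)
  also have "\<dots> = (\<Sum>a<N. cnj (c a) * (\<Sum>r\<in>R. cnj (E r a) * w r))"
    unfolding sum_distrib_left by (subst sum.swap) (simp add: mult_ac)
  also have "\<dots> = (\<Sum>a<N. cnj (c a) * (gram E E R N *\<^sub>v v) $ a)"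
    unfolding vc by (intro sum.cong refl) (simp add: gram_mult_vec w_def)
  also have "\<dots> = 0" using v(3) by simp
  finally have "(\<Sum>r\<in>R. cnj (w r) * w r) = 0" .
  moreover have "(\<Sum>r\<in>R. cnj (w r) * w r) = of_real (\<Sum>r\<in>R. (cmod (w r))\<^sup>2)"
    unfolding of_real_sum
    by (rule sum.cong[OF refl]) (subst complex_norm_square, simp add: mult.commute)
  ultimately have "complex_of_real (\<Sum>r\<in>R. (cmod (w r))\<^sup>2) = 0" by (simp only:)
  then have "(\<Sum>r\<in>R. (cmod (w r))\<^sup>2) = 0" by (simp only: of_real_eq_0_iff)
  then have "\<forall>r\<in>R. w r = 0" using R by (simp add: sum_nonneg_eq_0_iff)
  then have "\<forall>b<N. c b = 0" using inj unfolding w_def by blast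
  then show False using v(1,2) vc by (auto simp: vec_eq_iff)
qed

text \<open>The separating function is the Gram determinant \<open>det (E(x)\<^sup>* E(y))\<close>.\<close>
lemma zpoly_separates_injective_system:
  fixes e :: "'r \<Rightarrow> nat \<Rightarrow> qdat \<Rightarrow> complex"
  assumes R: "finite R" and e: "\<And>r b. r \<in> R \<Longrightarrow> b < N \<Longrightarrow> e r b \<in> zpoly"
    and inj: "\<And>c. \<forall>r\<in>R. (\<Sum>b<N. e r b x * c b) = 0 \<Longrightarrow> \<forall>b<N. c b = 0"
  obtains f where "f \<in> zpoly" "f x \<noteq> 0"
    "\<And>y c. \<exists>b<N. c b \<noteq> 0 \<Longrightarrow> \<forall>r\<in>R. (\<Sum>b<N. e r b y * c b) = 0 \<Longrightarrow> f y = 0"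
proof -
  let ?G = "\<lambda>y. gram (\<lambda>r b. e r b x) (\<lambda>r b. e r b y) R N"
  have "(\<lambda>y. det (?G y)) \<in> zpoly"
    unfolding gram_def by (intro zpoly_det zpoly_sum zmul[OF zconst] e) (use R in auto)
  moreover have "det (?G x) \<noteq> 0" by (rule det_gram_self_neq_0[OF R inj])
  moreover have "det (?G y) = 0"
    if "\<exists>b<N. c b \<noteq> 0" "\<forall>r\<in>R. (\<Sum>b<N. e r b y * c b) = 0" for y c
    by (rule det_gram_eq_0[OF that])
  ultimately show ?thesis by (rule that[of "\<lambda>y. det (?G y)"])
qed

lemma zariski_open_in_if_separated:
  assumes "S \<subseteq> X" and sep: "\<And>x. x \<in> S \<Longrightarrow> \<exists>f\<in>zpoly. f x \<noteq> 0 \<and> (\<forall>y\<in>X - S. f y = 0)"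
  shows "zariski_open_in X S"
  unfolding zariski_open_in_def
proof (intro conjI exI)
  let ?Fs = "{f \<in> zpoly. \<forall>y\<in>X - S. f y = 0}"
  show "S \<subseteq> X" "?Fs \<subseteq> zpoly" using assms(1) by auto
  show "X - S = {x \<in> X. \<forall>f\<in>?Fs. f x = 0}"
  proof
    show "X - S \<subseteq> {x \<in> X. \<forall>f\<in>?Fs. f x = 0}" by auto
    show "{x \<in> X. \<forall>f\<in>?Fs. f x = 0} \<subseteq> X - S"
    proof
      fix x assume x: "x \<in> {x \<in> X. \<forall>f\<in>?Fs. f x = 0}"
      have "x \<notin> S"
      proof
        assume "x \<in> S"
        then obtain f where "f \<in> zpoly" "f x \<noteq> 0" "\<forall>y\<in>X - S. f y = 0" using sep by blast
        then show False using x by auto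
      qed
      then show "x \<in> X - S" using x by simp
    qed
  qed
qed

definition Amul :: "qdat \<Rightarrow> complex poly \<Rightarrow> complex poly \<Rightarrow> complex poly \<times> complex poly" where
  "Amul x s1 s2 = (qA11 x * s1 + qA12 x * s2, qA21 x * s1 + qA22 x * s2)"

lemma mapply_poly_Amul:
  "mapply (\<lambda>a b. poly (Aent x a b) z) (poly s1 z, poly s2 z) =
     (poly (fst (Amul x s1 s2)) z, poly (snd (Amul x s1 s2)) z)"
  by (simp add: mapply_def Aent_def Amul_def)

lemma Amul_mult: "Amul x (g * s1) (g * s2) = (g * fst (Amul x s1 s2), g * snd (Amul x s1 s2))"
  by (simp add: Amul_def algebra_simps)

lemma Phi_inv_if_Amul_eq_0: "Amul x s1 s2 = (0, 0) \<Longrightarrow> Phi_inv x s1 s2"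
  unfolding Phi_inv_def mapply_poly_Amul line_of_def by (auto intro: exI[of _ 0])

lemma QPH_degrees:
  assumes "x \<in> QPH z1 m1 m2"
  shows "polyle (qA11 x) 2" "polyle (qA22 x) 2"
    "polyle (qA12 x) (m1 - m2 + 2)" "polyle (qA21 x) (m2 - m1 + 2)"
  using assms by (auto simp: QPH_def Aent_def mdeg_def)

lemma QPH_fibre_nonzero: "x \<in> QPH z1 m1 m2 \<Longrightarrow> i \<in> {1..4} \<Longrightarrow> Fv x i \<noteq> (0, 0)"
  by (auto simp: QPH_def)

lemma polyle_Amul:
  assumes "x \<in> QPH z1 m1 m2" "polyle s1 (m1 - k)" "polyle s2 (m2 - k)"
  shows "polyle (fst (Amul x s1 s2)) (m1 - k + 2)" "polyle (snd (Amul x s1 s2)) (m2 - k + 2)"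
  unfolding Amul_def fst_conv snd_conv
  by (rule polyle_add; rule polyle_mono[OF polyle_mult], use QPH_degrees[OF assms(1)] assms(2,3) in auto)+

text \<open>At a finite marked point the residue is the value of \<open>A\<close> divided by the nonzero number
  \<open>\<Prod>q\<noteq>i. (z\<^sub>i - z\<^sub>q)\<close>, so eigenvalues of \<open>A(z\<^sub>i)\<close> vanish with those of the nilpotent residue.\<close>
lemma eigenvalue_at_finite_marked_point:
  assumes x: "x \<in> QPH z1 m1 m2" and z: "z1 \<noteq> 0" "z1 \<noteq> 1" and i: "i \<in> {1,2,3}"
    and v: "v \<noteq> (0, 0)" "mapply (\<lambda>a b. poly (Aent x a b) (pt z1 i)) v = (\<mu> * fst v, \<mu> * snd v)"
  shows "\<mu> = 0"
proof -
  define P where "P = (\<Prod>q\<in>{1,2,3} - {i}. (pt z1 i - pt z1 q))"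
  have "P \<noteq> 0" using z i by (auto simp: P_def pt_def)
  have "resid z1 m1 m2 x i = (\<lambda>a b. poly (Aent x a b) (pt z1 i) / P)"
    using i by (auto simp: resid_def P_def)
  then have "mapply (resid z1 m1 m2 x i) v =
      (fst (mapply (\<lambda>a b. poly (Aent x a b) (pt z1 i)) v) / P,
       snd (mapply (\<lambda>a b. poly (Aent x a b) (pt z1 i)) v) / P)"
    by (simp add: mapply_def add_divide_distrib)
  also have "\<dots> = (\<mu> / P * fst v, \<mu> / P * snd v)" using v(2) by simp
  finally have "mapply (resid z1 m1 m2 x i) v = (\<mu> / P * fst v, \<mu> / P * snd v)" .
  moreover have "nilpotent2 (resid z1 m1 m2 x i)" using x i by (auto simp: QPH_def)
  ultimately have "\<mu> / P = 0" using nilpotent2_eigenvalue_eq_0 v(1) by blast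
  then show ?thesis using \<open>P \<noteq> 0\<close> by simp
qed

lemma poly_eq_0_if_vanishes_at_marked_points:
  assumes "z1 \<noteq> 0" "z1 \<noteq> 1" "polyle l 2" "\<And>i. i \<in> {1,2,3} \<Longrightarrow> poly l (pt z1 i) = 0"
  shows "l = 0"
proof (rule ccontr)
  assume "l \<noteq> 0"
  then have "card {z1, 0, 1} \<le> degree l"
    using assms(4)[of 1] assms(4)[of 2] assms(4)[of 3]
    by (intro card_roots_le_degree) (auto simp: pt_def)
  then show False using assms(1-3) \<open>l \<noteq> 0\<close> by (simp add: polyle_def)
qed

lemma Phi_inv_eigenpolynomial:
  assumes inv: "Phi_inv x s1 s2" and cop: "coprime s1 s2"
  obtains l where "Amul x s1 s2 = (l * s1, l * s2)"
proof -
  obtain u1 u2 where u: "Amul x s1 s2 = (u1, u2)" by force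
  have "poly u1 z * poly s2 z = poly u2 z * poly s1 z" for z
  proof -
    have "(poly u1 z, poly u2 z) \<in> line_of (poly s1 z, poly s2 z)"
      using inv mapply_poly_Amul[of x z s1 s2] u unfolding Phi_inv_def by (metis fst_conv snd_conv)
    then obtain c where "(poly u1 z, poly u2 z) = (c * poly s1 z, c * poly s2 z)"
      unfolding mem_line_of_iff by auto
    then show ?thesis by (simp add: mult_ac)
  qed
  then have "u1 * s2 = u2 * s1" by (intro poly_ext) simp
  then obtain l where "u1 = l * s1" "u2 = l * s2" using coprime_proportional_factor[OF cop] by blast
  then have "Amul x s1 s2 = (l * s1, l * s2)" using u by simp
  then show ?thesis by (rule that)
qed

lemma Amul_eq_0_if_Phi_inv:
  assumes x: "x \<in> QPH z1 m1 m2" and z: "z1 \<noteq> 0" "z1 \<noteq> 1"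
    and L: "lsub m1 m2 k s1 s2" and inv: "Phi_inv x s1 s2"
  shows "Amul x s1 s2 = (0, 0)"
proof -
  have "coprime s1 s2" using L by (intro coprime_if_no_common_root) (auto simp: lsub_def)
  then obtain l where l: "Amul x s1 s2 = (l * s1, l * s2)"
    using Phi_inv_eigenpolynomial[OF inv] by blast
  have nz: "(poly s1 z, poly s2 z) \<noteq> (0, 0)" for z using L by (auto simp: lsub_def)
  have roots: "poly l (pt z1 i) = 0" if "i \<in> {1,2,3}" for i
    using eigenvalue_at_finite_marked_point[OF x z that nz[of "pt z1 i"], of "poly l (pt z1 i)"]
      mapply_poly_Amul[of x "pt z1 i" s1 s2] l by simp
  have "polyle s1 (m1 - k)" "polyle s2 (m2 - k)" using L by (auto simp: lsub_def)
  note polyle_Amul[OF x this]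
  then have "polyle (l * s1) (m1 - k + 2)" "polyle (l * s2) (m2 - k + 2)" using l by simp_all
  then have "polyle l 2" using L polyle_cancel_topco by (auto simp: lsub_def)
  then have "l = 0" using poly_eq_0_if_vanishes_at_marked_points[OF z] roots by blast
  then show ?thesis using l by simp
qed

lemma betaI_eq: "I \<subseteq> {1..4} \<Longrightarrow> betaI \<beta> I = 2 * sum \<beta> I - sum \<beta> {1..4}"
  unfolding betaI_def by (subst sum_diff) (auto intro: finite_subset)

lemma betaI_bounds:
  assumes "I \<subseteq> {1..4}" "\<forall>i\<in>{1..4}. 0 \<le> \<beta> i \<and> \<beta> i < 1"
  shows "- 4 < betaI \<beta> I" "betaI \<beta> I < 4"
proof -
  have "sum \<beta> {1..4} < 4" "0 \<le> sum \<beta> {1..4}"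
    using assms(2) by (simp_all add: numeral_eq_Suc atLeastAtMostSuc_conv)
  moreover have "0 \<le> sum \<beta> I" "sum \<beta> I \<le> sum \<beta> {1..4}"
    using assms by (auto intro: sum_nonneg sum_mono2)
  ultimately show "- 4 < betaI \<beta> I" "betaI \<beta> I < 4" using betaI_eq[OF assms(1), of \<beta>] by linarith+
qed

lemma betaI_le_add_card_diff:
  assumes "I \<subseteq> {1..4}" "I' \<subseteq> {1..4}" "\<forall>i\<in>{1..4}. 0 \<le> \<beta> i \<and> \<beta> i \<le> 1"
  shows "betaI \<beta> I \<le> betaI \<beta> I' + 2 * real (card (I - I'))"
proof -
  have fin: "finite I" "finite I'" using assms(1,2) by (auto intro: finite_subset)
  have "sum \<beta> I = sum \<beta> (I - I') + sum \<beta> (I \<inter> I')"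
    using fin by (metis Diff_Diff_Int Diff_subset sum.subset_diff Int_lower1 add.commute)
  moreover have "sum \<beta> (I - I') \<le> card (I - I')"
    using sum_bounded_above[of "I - I'" \<beta> 1] assms(1,3) by auto
  moreover have "sum \<beta> (I \<inter> I') \<le> sum \<beta> I'"
    using assms fin by (intro sum_mono2) auto
  ultimately show ?thesis using betaI_eq[OF assms(1), of \<beta>] betaI_eq[OF assms(2), of \<beta>] by linarith
qed

lemma QPH_Cstar_beta_stable:
  assumes z: "z1 \<noteq> 0" "z1 \<noteq> 1" and x: "x \<in> QPH_Cstar z1 m1 m2"
  shows "beta_stable z1 m1 m2 \<beta> x"
  unfolding beta_stable_def
proof (intro allI impI, elim conjE)
  fix k s1 s2
  assume L: "lsub m1 m2 k s1 s2" and inv: "Phi_inv x s1 s2"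
  let ?d = "qA11 x * qA22 x - qA12 x * qA21 x"
  have "?d \<noteq> 0" "x \<in> QPH z1 m1 m2" using x by (auto simp: QPH_Cstar_def)
  then have "Amul x s1 s2 = (0, 0)" using Amul_eq_0_if_Phi_inv z L inv by blast
  moreover have "?d * s1 = qA22 x * fst (Amul x s1 s2) - qA12 x * snd (Amul x s1 s2)"
    "?d * s2 = qA11 x * snd (Amul x s1 s2) - qA21 x * fst (Amul x s1 s2)"
    by (simp_all add: Amul_def algebra_simps)
  ultimately have "s1 = 0" "s2 = 0" using \<open>?d \<noteq> 0\<close> by simp_all
  then show "betaI \<beta> (I_L z1 m1 m2 x k s1 s2) < real_of_int (m1 + m2 - 2 * k)"
    using L by (simp add: lsub_def)
qed

lemma QPH_stable_empty_if_gap_ge_4: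
  assumes gap: "4 \<le> m1 - m2" and \<beta>: "\<forall>i\<in>{1..4}. 0 \<le> \<beta> i \<and> \<beta> i < 1"
  shows "QPH_stable z1 m1 m2 \<beta> = {}"
proof (rule ccontr)
  assume "QPH_stable z1 m1 m2 \<beta> \<noteq> {}"
  then obtain x where x: "x \<in> QPH z1 m1 m2" and st: "beta_stable z1 m1 m2 \<beta> x"
    by (auto simp: QPH_stable_def)
  have L: "lsub m1 m2 m1 1 0" by (simp add: lsub_def polyle_def topco_def)
  have "qA21 x = 0" using QPH_degrees(4)[OF x] gap by (intro polyle_neg_eq_0) auto
  then have "Phi_inv x 1 0"
    unfolding Phi_inv_def line_of_def by (auto simp: mapply_def Aent_def)
  then have "betaI \<beta> (I_L z1 m1 m2 x m1 1 0) < m2 - m1"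
    using st L unfolding beta_stable_def by fastforce
  moreover have "- 4 < betaI \<beta> (I_L z1 m1 m2 x m1 1 0)"
    using \<beta> by (intro betaI_bounds) (auto simp: I_L_def)
  ultimately show False using gap by linarith
qed

text \<open>A nonzero section \<open>(s\<^sub>1, s\<^sub>2)\<close> of \<open>E(-k)\<close>, i.e. a sheaf map \<open>O(k) \<rightarrow> E\<close> that need not be
  a subbundle, which is killed by \<open>\<Phi>\<close> and whose value at \<open>z\<^sub>i\<close>, \<open>i \<in> I\<close>, lies in \<open>F\<^sub>i\<close> (or vanishes).\<close>
definition incident_kernel_section ::
  "complex \<Rightarrow> int \<Rightarrow> int \<Rightarrow> qdat \<Rightarrow> int \<Rightarrow> nat set \<Rightarrow> complex poly \<Rightarrow> complex poly \<Rightarrow> bool" where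
  "incident_kernel_section z1 m1 m2 x k I s1 s2 \<longleftrightarrow>
     (s1 \<noteq> 0 \<or> s2 \<noteq> 0) \<and> polyle s1 (m1 - k) \<and> polyle s2 (m2 - k) \<and> Amul x s1 s2 = (0, 0) \<and>
     (\<forall>i\<in>I. det2 (Lfib z1 m1 m2 k s1 s2 i) (Fv x i) = 0)"

lemma Lfib_nonzero_if_lsub: "lsub m1 m2 k s1 s2 \<Longrightarrow> Lfib z1 m1 m2 k s1 s2 i \<noteq> (0, 0)"
  by (auto simp: lsub_def Lfib_def)

lemma lsub_saturation:
  fixes g s1 s2 :: "complex poly"
  assumes g: "g \<noteq> 0" and s: "s1 \<noteq> 0 \<or> s2 \<noteq> 0" and cop: "\<And>z. poly s1 z = 0 \<Longrightarrow> poly s2 z \<noteq> 0"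
    and deg: "polyle (g * s1) (m1 - k)" "polyle (g * s2) (m2 - k)"
  obtains k' where "lsub m1 m2 k' s1 s2" "k + int (degree g) \<le> k'"
proof -
  define k' where "k' = (if s1 = 0 then m2 - degree s2 else if s2 = 0 then m1 - degree s1
                         else min (m1 - degree s1) (m2 - degree s2))"
  have "(s1 \<noteq> 0 \<and> m1 - k' = degree s1) \<or> (s2 \<noteq> 0 \<and> m2 - k' = degree s2)"
    using s by (auto simp: k'_def min_def)
  then have "topco s1 (m1 - k') \<noteq> 0 \<or> topco s2 (m2 - k') \<noteq> 0"
    by (auto simp: topco_def)
  moreover have "polyle s1 (m1 - k')" "polyle s2 (m2 - k')"
    by (auto simp: k'_def polyle_def)
  ultimately have "lsub m1 m2 k' s1 s2" using cop by (auto simp: lsub_def)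
  moreover have "k + int (degree g) \<le> k'"
  proof -
    have "int (degree g) + int (degree s1) \<le> m1 - k" if "s1 \<noteq> 0"
      using deg(1) g that polyle_mult_iff_degree by blast
    moreover have "int (degree g) + int (degree s2) \<le> m2 - k" if "s2 \<noteq> 0"
      using deg(2) g that polyle_mult_iff_degree by blast
    ultimately show ?thesis using s unfolding k'_def by auto
  qed
  ultimately show ?thesis by (rule that)
qed

lemma Lfib_mult_finite:
  "i \<noteq> 4 \<Longrightarrow> Lfib z1 m1 m2 k (g * s1) (g * s2) i =
     (poly g (pt z1 i) * fst (Lfib z1 m1 m2 k' s1 s2 i), poly g (pt z1 i) * snd (Lfib z1 m1 m2 k' s1 s2 i))"
  by (simp add: Lfib_def)

lemma Lfib_mult_infinity:
  assumes "g \<noteq> 0" "polyle s1 (m1 - k')" "polyle s2 (m2 - k')" "k' = k + int (degree g)"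
  shows "Lfib z1 m1 m2 k (g * s1) (g * s2) 4 =
     (lead_coeff g * fst (Lfib z1 m1 m2 k' s1 s2 4), lead_coeff g * snd (Lfib z1 m1 m2 k' s1 s2 4))"
proof -
  have e: "m1 - k = int (degree g) + (m1 - k')" "m2 - k = int (degree g) + (m2 - k')"
    using assms(4) by simp_all
  have "topco (g * s1) (m1 - k) = lead_coeff g * topco s1 (m1 - k')"
    "topco (g * s2) (m2 - k) = lead_coeff g * topco s2 (m2 - k')"
    unfolding e by (rule topco_mult[OF assms(2,1)], rule topco_mult[OF assms(3,1)])
  then show ?thesis by (simp add: Lfib_def)
qed

lemma incidence_kept_under_saturation:
  assumes x: "x \<in> QPH z1 m1 m2" and L: "lsub m1 m2 k' s1 s2" and g: "g \<noteq> 0"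
    and i: "i \<in> {1..4}" "det2 (Lfib z1 m1 m2 k (g * s1) (g * s2) i) (Fv x i) = 0"
    and root: "i \<noteq> 4 \<Longrightarrow> poly g (pt z1 i) \<noteq> 0" and infty: "i = 4 \<Longrightarrow> k' = k + int (degree g)"
  shows "i \<in> I_L z1 m1 m2 x k' s1 s2"
proof -
  obtain c where "c \<noteq> 0" and c: "Lfib z1 m1 m2 k (g * s1) (g * s2) i =
      (c * fst (Lfib z1 m1 m2 k' s1 s2 i), c * snd (Lfib z1 m1 m2 k' s1 s2 i))"
  proof (cases "i = 4")
    case True
    then show ?thesis
      using that[of "lead_coeff g"] Lfib_mult_infinity[OF g _ _ infty] g L by (auto simp: lsub_def)
  next
    case False
    then show ?thesis using that[of "poly g (pt z1 i)"] Lfib_mult_finite root by blast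
  qed
  then have "det2 (Lfib z1 m1 m2 k' s1 s2 i) (Fv x i) = 0" using i(2) det2_scale_left by simp
  then have "line_of (Lfib z1 m1 m2 k' s1 s2 i) = line_of (Fv x i)"
    using line_of_eq_if_det2_eq_0 Lfib_nonzero_if_lsub[OF L] QPH_fibre_nonzero[OF x i(1)] by blast
  then show ?thesis using i(1) by (simp add: I_L_def)
qed

lemma card_marked_roots_le_degree:
  assumes "g \<noteq> 0" "z1 \<noteq> 0" "z1 \<noteq> 1"
  shows "card {i \<in> {1,2,3}. poly g (pt z1 i) = 0} \<le> degree g"
proof -
  have "inj_on (pt z1) {1,2,3}" using assms(2,3) by (simp add: pt_def)
  then have "inj_on (pt z1) {i \<in> {1,2,3}. poly g (pt z1 i) = 0}" by (rule inj_on_subset) auto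
  then have "card {i \<in> {1,2,3}. poly g (pt z1 i) = 0} = card (pt z1 ` {i \<in> {1,2,3}. poly g (pt z1 i) = 0})"
    by (simp add: card_image)
  also have "\<dots> \<le> degree g" by (rule card_roots_le_degree[OF assms(1)]) auto
  finally show ?thesis .
qed

lemma card_lost_incidences_le:
  assumes x: "x \<in> QPH z1 m1 m2" and z: "z1 \<noteq> 0" "z1 \<noteq> 1"
    and L: "lsub m1 m2 k' s1 s2" and g: "g \<noteq> 0" and k': "k + int (degree g) \<le> k'"
    and I: "I \<subseteq> {1..4}" and inc: "\<forall>i\<in>I. det2 (Lfib z1 m1 m2 k (g * s1) (g * s2) i) (Fv x i) = 0"
  shows "real (card (I - I_L z1 m1 m2 x k' s1 s2)) \<le> k' - k"
proof -
  let ?I' = "I_L z1 m1 m2 x k' s1 s2"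
  let ?lost = "{i \<in> {1,2,3}. poly g (pt z1 i) = 0} \<union> (if k' = k + int (degree g) then {} else {4})"
  have "I - ?I' \<subseteq> ?lost"
  proof
    fix i assume i: "i \<in> I - ?I'"
    then have "i \<in> {1..4}" "det2 (Lfib z1 m1 m2 k (g * s1) (g * s2) i) (Fv x i) = 0"
      using I inc by auto
    show "i \<in> ?lost"
    proof (rule ccontr)
      assume "i \<notin> ?lost"
      then have root: "i \<noteq> 4 \<Longrightarrow> poly g (pt z1 i) \<noteq> 0"
        and infty: "i = 4 \<Longrightarrow> k' = k + int (degree g)"
        using \<open>i \<in> {1..4}\<close> by (auto split: if_splits)
      have "i \<in> ?I'"
        by (rule incidence_kept_under_saturation[OF x L g \<open>i \<in> {1..4}\<close> \<open>det2 _ _ = 0\<close> root infty])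
      then show False using i by simp
    qed
  qed
  then have "card (I - ?I') \<le> card ?lost" by (intro card_mono) auto
  also have "\<dots> \<le> card {i \<in> {1,2,3}. poly g (pt z1 i) = 0} +
      card (if k' = k + int (degree g) then {} else {4::nat})"
    by (rule card_Un_le)
  also have "\<dots> \<le> degree g + (if k' = k + int (degree g) then 0 else 1)"
    using card_marked_roots_le_degree[OF g z] by simp
  finally show ?thesis using k' by (cases "k' = k + int (degree g)") auto
qed

text \<open>Dividing out the common factor \<open>g\<close> gives a line subbundle \<open>O(k')\<close>, \<open>k' \<ge> k + deg g\<close>, which keeps
  every incidence except at the roots of \<open>g\<close> among \<open>z\<^sub>1, z\<^sub>2, z\<^sub>3\<close> and, if \<open>k' > k + deg g\<close>, at \<open>z\<^sub>4 = \<infinity>\<close>.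
  Each lost incidence lowers \<open>\<beta>\<^sub>I\<close> by at most 2, each unit of degree gained lowers the bound by 2.\<close>
lemma not_beta_stable_if_incident_kernel_section:
  assumes x: "x \<in> QPH z1 m1 m2" and z: "z1 \<noteq> 0" "z1 \<noteq> 1"
    and \<beta>: "\<forall>i\<in>{1..4}. 0 \<le> \<beta> i \<and> \<beta> i \<le> 1" and I: "I \<subseteq> {1..4}"
    and s: "incident_kernel_section z1 m1 m2 x k I s1 s2"
    and bI: "real_of_int (m1 + m2 - 2 * k) \<le> betaI \<beta> I"
  shows "\<not> beta_stable z1 m1 m2 \<beta> x"
proof
  assume st: "beta_stable z1 m1 m2 \<beta> x"
  obtain g s1' s2' where g: "g \<noteq> 0" and s': "s1 = g * s1'" "s2 = g * s2'"
    and cop: "\<And>z. poly s1' z = 0 \<Longrightarrow> poly s2' z \<noteq> 0"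
    using common_factor_decomposition s unfolding incident_kernel_section_def by metis
  have "s1' \<noteq> 0 \<or> s2' \<noteq> 0" using s s' by (auto simp: incident_kernel_section_def)
  then obtain k' where L: "lsub m1 m2 k' s1' s2'" and k': "k + int (degree g) \<le> k'"
    using lsub_saturation[OF g _ cop] s s' unfolding incident_kernel_section_def by metis
  have "Amul x s1' s2' = (0, 0)"
    using s s' g Amul_mult[of x g s1' s2'] by (auto simp: incident_kernel_section_def prod_eq_iff)
  then have "Phi_inv x s1' s2'" by (rule Phi_inv_if_Amul_eq_0)
  define I' where "I' = I_L z1 m1 m2 x k' s1' s2'"
  have "betaI \<beta> I' < m1 + m2 - 2 * k'"
    using st L \<open>Phi_inv x s1' s2'\<close> by (auto simp: beta_stable_def I'_def)
  moreover have "real (card (I - I')) \<le> k' - k"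
    unfolding I'_def using card_lost_incidences_le[OF x z L g k' I] s s'
    by (simp add: incident_kernel_section_def)
  moreover have "betaI \<beta> I \<le> betaI \<beta> I' + 2 * real (card (I - I'))"
    using I \<beta> by (intro betaI_le_add_card_diff) (auto simp: I'_def I_L_def)
  ultimately show False using bI by linarith
qed

lemma incident_kernel_section_if_not_beta_stable:
  assumes x: "x \<in> QPH z1 m1 m2" and z: "z1 \<noteq> 0" "z1 \<noteq> 1"
    and "\<not> beta_stable z1 m1 m2 \<beta> x"
  obtains k I s1 s2 where "I \<subseteq> {1..4}" "real_of_int (m1 + m2 - 2 * k) \<le> betaI \<beta> I"
    "incident_kernel_section z1 m1 m2 x k I s1 s2"
proof -
  obtain k s1 s2 where L: "lsub m1 m2 k s1 s2" and inv: "Phi_inv x s1 s2"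
    and bad: "\<not> betaI \<beta> (I_L z1 m1 m2 x k s1 s2) < real_of_int (m1 + m2 - 2 * k)"
    using assms(4) unfolding beta_stable_def by blast
  have "I_L z1 m1 m2 x k s1 s2 \<subseteq> {1..4}" by (auto simp: I_L_def)
  moreover have "real_of_int (m1 + m2 - 2 * k) \<le> betaI \<beta> (I_L z1 m1 m2 x k s1 s2)"
    using bad by linarith
  moreover have "s1 \<noteq> 0 \<or> s2 \<noteq> 0" using L by (auto simp: lsub_def)
  then have "incident_kernel_section z1 m1 m2 x k (I_L z1 m1 m2 x k s1 s2) s1 s2"
    using L Amul_eq_0_if_Phi_inv[OF x z L inv] det2_eq_0_if_line_of_eq
    unfolding incident_kernel_section_def lsub_def I_L_def by auto
  ultimately show ?thesis by (rule that)
qed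

theorem not_beta_stable_iff_incident_kernel_section:
  assumes x: "x \<in> QPH z1 m1 m2" and z: "z1 \<noteq> 0" "z1 \<noteq> 1"
    and \<beta>: "\<forall>i\<in>{1..4}. 0 \<le> \<beta> i \<and> \<beta> i \<le> 1"
  shows "\<not> beta_stable z1 m1 m2 \<beta> x \<longleftrightarrow> (\<exists>k I s1 s2. I \<subseteq> {1..4} \<and>
     real_of_int (m1 + m2 - 2 * k) \<le> betaI \<beta> I \<and> incident_kernel_section z1 m1 m2 x k I s1 s2)"
    (is "_ \<longleftrightarrow> ?destabilised")
proof
  assume "\<not> beta_stable z1 m1 m2 \<beta> x"
  then obtain k I s1 s2 where "I \<subseteq> {1..4}" "real_of_int (m1 + m2 - 2 * k) \<le> betaI \<beta> I"
    "incident_kernel_section z1 m1 m2 x k I s1 s2"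
    by (rule incident_kernel_section_if_not_beta_stable[OF x z])
  then show ?destabilised by blast
qed (use not_beta_stable_if_incident_kernel_section[OF x z \<beta>] in blast)

lemma incident_kernel_section_degree_range:
  assumes s: "incident_kernel_section z1 m1 m2 x k I s1 s2" and I: "I \<subseteq> {1..4}"
    and bI: "real_of_int (m1 + m2 - 2 * k) \<le> betaI \<beta> I"
    and \<beta>: "\<forall>i\<in>{1..4}. 0 \<le> \<beta> i \<and> \<beta> i < 1" and gap: "m2 \<le> m1" "m1 - m2 \<le> 2"
  shows "k \<in> {m1 - 2..m1}"
proof -
  have "k \<le> m1"
  proof (rule ccontr)
    assume "\<not> k \<le> m1"
    then have "s1 = 0" "s2 = 0"
      using s gap(1) polyle_neg_eq_0 by (auto simp: incident_kernel_section_def)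
    then show False using s by (simp add: incident_kernel_section_def)
  qed
  moreover have "real_of_int (m1 + m2 - 2 * k) < 4" using betaI_bounds(2)[OF I \<beta>] bI by linarith
  then have "m1 + m2 - 2 * k < 4" by simp
  then have "m1 - 2 \<le> k" using gap(2) by linarith
  ultimately show ?thesis by simp
qed

text \<open>An incident kernel section of \<open>E(-k)\<close> is a nonzero solution of a linear system in the
  coefficients of \<open>(s\<^sub>1, s\<^sub>2)\<close>: the coefficients of \<open>A s\<close> up to its degree bound, and the incidence
  determinants. Unknown \<open>b < n\<^sub>1\<close> is the coefficient of \<open>z\<^sup>b\<close> in \<open>s\<^sub>1\<close>, unknown \<open>n\<^sub>1 + b\<close> that of
  \<open>z\<^sup>b\<close> in \<open>s\<^sub>2\<close>.\<close>
datatype eqn = Coeff1 nat | Coeff2 nat | Incidence nat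

definition eqns :: "int \<Rightarrow> int \<Rightarrow> int \<Rightarrow> nat set \<Rightarrow> eqn set" where
  "eqns m1 m2 k I = Coeff1 ` {..nat (m1 - k + 2)} \<union> Coeff2 ` {..nat (m2 - k + 2)} \<union> Incidence ` I"

definition eqn_val ::
  "complex \<Rightarrow> int \<Rightarrow> int \<Rightarrow> int \<Rightarrow> qdat \<Rightarrow> eqn \<Rightarrow> complex poly \<times> complex poly \<Rightarrow> complex" where
  "eqn_val z1 m1 m2 k y e s = (case e of
      Coeff1 n \<Rightarrow> coeff (fst (Amul y (fst s) (snd s))) n
    | Coeff2 n \<Rightarrow> coeff (snd (Amul y (fst s) (snd s))) n
    | Incidence i \<Rightarrow> det2 (Lfib z1 m1 m2 k (fst s) (snd s) i) (Fv y i))"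

definition column :: "nat \<Rightarrow> nat \<Rightarrow> complex poly \<times> complex poly" where
  "column n1 b = (if b < n1 then (monom 1 b, 0) else (0, monom 1 (b - n1)))"

definition combination :: "nat \<Rightarrow> nat \<Rightarrow> (nat \<Rightarrow> complex) \<Rightarrow> complex poly \<times> complex poly" where
  "combination n1 N c = ((\<Sum>b<N. Polynomial.smult (c b) (fst (column n1 b))),
                         (\<Sum>b<N. Polynomial.smult (c b) (snd (column n1 b))))"

lemma coeff_column:
  "coeff (fst (column n1 b)) n = (if b = n \<and> n < n1 then 1 else 0)"
  "coeff (snd (column n1 b)) n = (if b = n1 + n then 1 else 0)"
  unfolding column_def by (cases "b < n1"; simp add: coeff_monom; linarith)+

lemma coeff_combination:
  "coeff (fst (combination n1 N c)) n = (if n < n1 \<and> n < N then c n else 0)"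
  "coeff (snd (combination n1 N c)) n = (if n1 + n < N then c (n1 + n) else 0)"
proof -
  have "coeff (fst (combination n1 N c)) n = (\<Sum>b<N. if b = n then (if n < n1 then c n else 0) else 0)"
    unfolding combination_def fst_conv snd_conv coeff_sum coeff_smult coeff_column
    by (intro sum.cong) auto
  then show "coeff (fst (combination n1 N c)) n = (if n < n1 \<and> n < N then c n else 0)"
    by (simp add: sum.delta)
  have "coeff (snd (combination n1 N c)) n = (\<Sum>b<N. if b = n1 + n then c (n1 + n) else 0)"
    unfolding combination_def fst_conv snd_conv coeff_sum coeff_smult coeff_column
    by (intro sum.cong) auto
  then show "coeff (snd (combination n1 N c)) n = (if n1 + n < N then c (n1 + n) else 0)"
    by (simp add: sum.delta)
qed

lemma polyle_combination:
  "polyle (fst (combination n1 N c)) (int n1 - 1)"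
  "N \<le> n1 + n2 \<Longrightarrow> polyle (snd (combination n1 N c)) (int n2 - 1)"
  by (auto intro!: polyle_if_coeffs_vanish simp: coeff_combination)

lemma combination_coeffs:
  assumes "polyle s1 (int n1 - 1)" "polyle s2 (int n2 - 1)"
  shows "combination n1 (n1 + n2) (\<lambda>b. if b < n1 then coeff s1 b else coeff s2 (b - n1)) = (s1, s2)"
  using coeff_eq_0_if_polyle[OF assms(1)] coeff_eq_0_if_polyle[OF assms(2)]
  by (auto intro!: poly_eqI simp: prod_eq_iff coeff_combination)

lemma combination_eq_0_imp:
  assumes "combination n1 N c = (0, 0)" "b < N"
  shows "c b = 0"
proof (cases "b < n1")
  case True
  then show ?thesis using assms coeff_combination(1)[of n1 N c b] by simp
next
  case False
  then show ?thesis using assms coeff_combination(2)[of n1 N c "b - n1"] by simp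
qed

lemma eqn_val_add_smult:
  "eqn_val z1 m1 m2 k y e (fst s + Polynomial.smult a (fst t), snd s + Polynomial.smult a (snd t)) =
     eqn_val z1 m1 m2 k y e s + eqn_val z1 m1 m2 k y e t * a"
  by (cases e) (simp_all add: eqn_val_def Amul_def Lfib_def det2_def topco_add topco_smult algebra_simps)

lemma eqn_val_combination:
  "eqn_val z1 m1 m2 k y e (combination n1 N c) = (\<Sum>b<N. eqn_val z1 m1 m2 k y e (column n1 b) * c b)"
proof (induction N)
  case 0
  show ?case
    by (cases e) (simp_all add: eqn_val_def combination_def Amul_def Lfib_def det2_def topco_def)
next
  case (Suc N)
  have "combination n1 (Suc N) c =
      (fst (combination n1 N c) + Polynomial.smult (c N) (fst (column n1 N)),
       snd (combination n1 N c) + Polynomial.smult (c N) (snd (column n1 N)))"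
    by (simp add: combination_def)
  then show ?case using Suc.IH by (simp add: eqn_val_add_smult)
qed

lemma zpoly_coeff_mult: "(\<And>j. (\<lambda>y. coeff (P y) j) \<in> zpoly) \<Longrightarrow> (\<lambda>y. coeff (P y * q) n) \<in> zpoly"
  unfolding coeff_mult by (intro zpoly_sum zmul zconst) auto

lemma zpoly_eqn_val: "(\<lambda>y. eqn_val z1 m1 m2 k y e s) \<in> zpoly"
proof -
  have "(\<lambda>y. coeff (qA11 y) j) \<in> zpoly" "(\<lambda>y. coeff (qA12 y) j) \<in> zpoly"
    "(\<lambda>y. coeff (qA21 y) j) \<in> zpoly" "(\<lambda>y. coeff (qA22 y) j) \<in> zpoly" for j
    using zA[of 1 1 j] zA[of 1 2 j] zA[of 2 1 j] zA[of 2 2 j] by (simp_all add: Aent_def)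
  then show ?thesis
    by (cases e) (auto simp: eqn_val_def Amul_def det2_def
        intro!: zadd zpoly_coeff_mult zpoly_diff zmul zconst zF1 zF2)
qed

lemma Ball_eqns:
  "(\<forall>e\<in>eqns m1 m2 k I. P e) \<longleftrightarrow> (\<forall>n\<le>nat (m1 - k + 2). P (Coeff1 n)) \<and>
     (\<forall>n\<le>nat (m2 - k + 2). P (Coeff2 n)) \<and> (\<forall>i\<in>I. P (Incidence i))"
  unfolding eqns_def by blast

lemma eqns_vanish_iff:
  assumes "y \<in> QPH z1 m1 m2" "polyle s1 (m1 - k)" "polyle s2 (m2 - k)"
  shows "(\<forall>e\<in>eqns m1 m2 k I. eqn_val z1 m1 m2 k y e (s1, s2) = 0) \<longleftrightarrow>
    Amul y s1 s2 = (0, 0) \<and> (\<forall>i\<in>I. det2 (Lfib z1 m1 m2 k s1 s2 i) (Fv y i) = 0)"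
proof -
  have "fst (Amul y s1 s2) = 0 \<longleftrightarrow> (\<forall>n\<le>nat (m1 - k + 2). coeff (fst (Amul y s1 s2)) n = 0)"
    "snd (Amul y s1 s2) = 0 \<longleftrightarrow> (\<forall>n\<le>nat (m2 - k + 2). coeff (snd (Amul y s1 s2)) n = 0)"
    using polyle_eq_0_iff_coeffs[OF polyle_Amul(1)[OF assms]]
      polyle_eq_0_iff_coeffs[OF polyle_Amul(2)[OF assms]] by simp_all
  then show ?thesis by (simp add: Ball_eqns eqn_val_def prod_eq_iff)
qed

lemma incident_kernel_section_iff_kernel:
  fixes k :: int
  assumes y: "y \<in> QPH z1 m1 m2"
  defines "n1 \<equiv> nat (m1 - k + 1)" and "n2 \<equiv> nat (m2 - k + 1)"
  shows "(\<exists>s1 s2. incident_kernel_section z1 m1 m2 y k I s1 s2) \<longleftrightarrow>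
    (\<exists>c. (\<exists>b<n1 + n2. c b \<noteq> 0) \<and>
       (\<forall>e\<in>eqns m1 m2 k I. (\<Sum>b<n1 + n2. eqn_val z1 m1 m2 k y e (column n1 b) * c b) = 0))"
    (is "_ \<longleftrightarrow> (\<exists>c. ?nonzero c \<and> ?solves c)")
proof -
  have n: "polyle p (int n1 - 1) \<longleftrightarrow> polyle p (m1 - k)" "polyle p (int n2 - 1) \<longleftrightarrow> polyle p (m2 - k)"
    for p by (auto simp: n1_def n2_def polyle_def)
  have solves_iff: "?solves c \<longleftrightarrow>
      (\<forall>e\<in>eqns m1 m2 k I. eqn_val z1 m1 m2 k y e (combination n1 (n1 + n2) c) = 0)" for c
    by (simp add: eqn_val_combination)
  show ?thesis
  proof
    assume "\<exists>s1 s2. incident_kernel_section z1 m1 m2 y k I s1 s2"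
    then obtain s1 s2 where s: "incident_kernel_section z1 m1 m2 y k I s1 s2" by blast
    have deg: "polyle s1 (m1 - k)" "polyle s2 (m2 - k)"
      using s by (simp_all add: incident_kernel_section_def)
    define c where "c b = (if b < n1 then coeff s1 b else coeff s2 (b - n1))" for b
    have comb: "combination n1 (n1 + n2) c = (s1, s2)"
      unfolding c_def using deg n by (intro combination_coeffs) simp_all
    have "?nonzero c"
    proof (rule ccontr)
      assume "\<not> ?nonzero c"
      then have "combination n1 (n1 + n2) c = (0, 0)" by (simp add: combination_def)
      then show False using comb s by (simp add: incident_kernel_section_def)
    qed
    moreover have "?solves c"
      unfolding solves_iff comb using eqns_vanish_iff[OF y deg] s
      by (simp add: incident_kernel_section_def)
    ultimately show "\<exists>c. ?nonzero c \<and> ?solves c" by blast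
  next
    assume "\<exists>c. ?nonzero c \<and> ?solves c"
    then obtain c where c: "?nonzero c" "?solves c" by blast
    obtain s1 s2 where comb: "combination n1 (n1 + n2) c = (s1, s2)" by force
    have "s1 \<noteq> 0 \<or> s2 \<noteq> 0" using c(1) comb combination_eq_0_imp by force
    moreover have deg: "polyle s1 (m1 - k)" "polyle s2 (m2 - k)"
      using polyle_combination(1)[of n1 "n1 + n2" c] polyle_combination(2)[of "n1 + n2" n1 n2 c] comb n
      by simp_all
    moreover have "Amul y s1 s2 = (0, 0) \<and> (\<forall>i\<in>I. det2 (Lfib z1 m1 m2 k s1 s2 i) (Fv y i) = 0)"
      using c(2) eqns_vanish_iff[OF y deg] unfolding solves_iff comb by simp
    ultimately have "incident_kernel_section z1 m1 m2 y k I s1 s2"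
      by (simp add: incident_kernel_section_def)
    then show "\<exists>s1 s2. incident_kernel_section z1 m1 m2 y k I s1 s2" by blast
  qed
qed

lemma zpoly_separates_incident_kernel_sections:
  assumes x: "x \<in> QPH z1 m1 m2" and "finite I"
    and none: "\<nexists>s1 s2. incident_kernel_section z1 m1 m2 x k I s1 s2"
  shows "\<exists>f\<in>zpoly. f x \<noteq> 0 \<and>
    (\<forall>y\<in>QPH z1 m1 m2. \<forall>s1 s2. incident_kernel_section z1 m1 m2 y k I s1 s2 \<longrightarrow> f y = 0)"
proof -
  let ?n1 = "nat (m1 - k + 1)" and ?N = "nat (m1 - k + 1) + nat (m2 - k + 1)"
  let ?E = "\<lambda>e b y. eqn_val z1 m1 m2 k y e (column ?n1 b)"
  have fin: "finite (eqns m1 m2 k I)" using \<open>finite I\<close> by (simp add: eqns_def)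
  have zp: "?E e b \<in> zpoly" if "e \<in> eqns m1 m2 k I" "b < ?N" for e b by (rule zpoly_eqn_val)
  have inj: "\<forall>b<?N. c b = 0" if "\<forall>e\<in>eqns m1 m2 k I. (\<Sum>b<?N. ?E e b x * c b) = 0" for c
    using that none incident_kernel_section_iff_kernel[OF x] by blast
  obtain f where f: "f \<in> zpoly" "f x \<noteq> 0"
    "\<And>y c. \<exists>b<?N. c b \<noteq> 0 \<Longrightarrow> \<forall>e\<in>eqns m1 m2 k I. (\<Sum>b<?N. ?E e b y * c b) = 0 \<Longrightarrow> f y = 0"
    using zpoly_separates_injective_system[where R = "eqns m1 m2 k I" and e = ?E and N = ?N and x = x,
      OF fin zp inj] by blast
  have vanish: "f y = 0"
    if y: "y \<in> QPH z1 m1 m2" and s: "incident_kernel_section z1 m1 m2 y k I s1 s2" for y s1 s2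
  proof -
    obtain c where "\<exists>b<?N. c b \<noteq> 0" "\<forall>e\<in>eqns m1 m2 k I. (\<Sum>b<?N. ?E e b y * c b) = 0"
      using incident_kernel_section_iff_kernel[OF y, of k I] s by blast
    then show ?thesis by (rule f(3))
  qed
  show ?thesis using f(1,2) vanish by blast
qed

lemma beta_stable_separated:
  assumes z: "z1 \<noteq> 0" "z1 \<noteq> 1" and gap: "m2 \<le> m1" "m1 - m2 \<le> 2"
    and \<beta>: "\<forall>i\<in>{1..4}. 0 \<le> \<beta> i \<and> \<beta> i < 1"
    and x: "x \<in> QPH z1 m1 m2" and st: "beta_stable z1 m1 m2 \<beta> x"
  shows "\<exists>f\<in>zpoly. f x \<noteq> 0 \<and> (\<forall>y\<in>QPH z1 m1 m2 - QPH_stable z1 m1 m2 \<beta>. f y = 0)"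
proof -
  have \<beta>1: "\<forall>i\<in>{1..4}. 0 \<le> \<beta> i \<and> \<beta> i \<le> 1" using \<beta> by fastforce
  define G where "G = {(k, I). k \<in> {m1 - 2..m1} \<and> I \<subseteq> {1..4} \<and>
                              real_of_int (m1 + m2 - 2 * k) \<le> betaI \<beta> I}"
  have "finite G"
    by (rule finite_subset[of _ "{m1 - 2..m1} \<times> Pow {1..4}"]) (auto simp: G_def)
  have "\<exists>f\<in>zpoly. f x \<noteq> 0 \<and> (\<forall>y\<in>QPH z1 m1 m2. \<forall>s1 s2.
      incident_kernel_section z1 m1 m2 y (fst p) (snd p) s1 s2 \<longrightarrow> f y = 0)" if "p \<in> G" for p
  proof -
    have none: "\<nexists>s1 s2. incident_kernel_section z1 m1 m2 x (fst p) (snd p) s1 s2"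
      using that st not_beta_stable_if_incident_kernel_section[OF x z \<beta>1] by (auto simp: G_def)
    have "snd p \<subseteq> {1..4}" using that by (auto simp: G_def)
    then have fin: "finite (snd p)" by (rule finite_subset) simp
    show ?thesis by (rule zpoly_separates_incident_kernel_sections[OF x fin none])
  qed
  then obtain F where F: "\<And>p. p \<in> G \<Longrightarrow> F p \<in> zpoly \<and> F p x \<noteq> 0 \<and> (\<forall>y\<in>QPH z1 m1 m2. \<forall>s1 s2.
      incident_kernel_section z1 m1 m2 y (fst p) (snd p) s1 s2 \<longrightarrow> F p y = 0)"
    by metis
  define f where "f = (\<lambda>y. \<Prod>p\<in>G. F p y)"
  have "f \<in> zpoly" unfolding f_def using \<open>finite G\<close> F by (intro zpoly_prod) auto
  moreover have "f x \<noteq> 0" using \<open>finite G\<close> F by (simp add: f_def prod_zero_iff)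
  moreover have "f y = 0" if "y \<in> QPH z1 m1 m2 - QPH_stable z1 m1 m2 \<beta>" for y
  proof -
    have y: "y \<in> QPH z1 m1 m2" "\<not> beta_stable z1 m1 m2 \<beta> y"
      using that by (auto simp: QPH_stable_def)
    then obtain k I s1 s2 where I: "I \<subseteq> {1..4}" and bI: "real_of_int (m1 + m2 - 2 * k) \<le> betaI \<beta> I"
      and s: "incident_kernel_section z1 m1 m2 y k I s1 s2"
      using not_beta_stable_iff_incident_kernel_section[OF y(1) z \<beta>1] by blast
    have kI: "(k, I) \<in> G"
      using incident_kernel_section_degree_range[OF s I bI \<beta> gap] I bI by (simp add: G_def)
    then have "F (k, I) y = 0" using F[OF kI] y(1) s by auto
    then show ?thesis using kI \<open>finite G\<close> by (auto simp: f_def prod_zero_iff)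
  qed
  ultimately show ?thesis by blast
qed

theorem QPH_stable_zariski_open:
  assumes z: "z1 \<noteq> 0" "z1 \<noteq> 1" and gap: "m2 \<le> m1" "m1 - m2 \<le> 2"
    and \<beta>: "\<forall>i\<in>{1..4}. 0 \<le> \<beta> i \<and> \<beta> i < 1"
  shows "zariski_open_in (QPH z1 m1 m2) (QPH_stable z1 m1 m2 \<beta>)"
proof (rule zariski_open_in_if_separated)
  show "QPH_stable z1 m1 m2 \<beta> \<subseteq> QPH z1 m1 m2" by (auto simp: QPH_stable_def)
  fix x assume "x \<in> QPH_stable z1 m1 m2 \<beta>"
  then show "\<exists>f\<in>zpoly. f x \<noteq> 0 \<and> (\<forall>y\<in>QPH z1 m1 m2 - QPH_stable z1 m1 m2 \<beta>. f y = 0)"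
    using beta_stable_separated[OF z gap \<beta>] by (auto simp: QPH_stable_def)
qed

lemma QPH_intro:
  assumes "\<forall>i\<in>{1..4}. Fv x i \<noteq> (0, 0)"
    "\<forall>a\<in>{1,2}. \<forall>b\<in>{1,2}. polyle (Aent x a b) (mdeg m1 m2 a - mdeg m1 m2 b + 2)"
    "\<And>i. i \<in> {1,2,3,4} \<Longrightarrow> nilpotent2 (resid z1 m1 m2 x i) \<and>
       (\<forall>w\<in>line_of (Fv x i). mapply (resid z1 m1 m2 x i) w = (0, 0))"
  shows "x \<in> QPH z1 m1 m2"
proof -
  have "{1..4::nat} = {1,2,3,4}" by auto
  then show ?thesis using assms unfolding QPH_def by auto
qed

text \<open>The witness \<open>A = [[0, z], [-(z - z\<^sub>1)(z - 1), 0]]\<close> has strictly upper triangular residues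
  at \<open>z\<^sub>1, 1\<close> and strictly lower triangular ones at \<open>0, \<infinity>\<close>.\<close>
lemma QPH_Cstar_nonempty_balanced:
  assumes z: "z1 \<noteq> 0" "z1 \<noteq> 1" and m: "m1 = m2"
  shows "QPH_Cstar z1 m1 m2 \<noteq> {}"
proof -
  define q where "q = [:-z1, 1 + z1, -1:]"
  define x where "x = \<lparr>qF1 = (1, 0), qF2 = (0, 1), qF3 = (1, 0), qF4 = (0, 1),
     qA11 = 0, qA12 = [:0, 1:], qA21 = q, qA22 = 0\<rparr>"
  have q: "poly q z1 = 0" "poly q 1 = 0" "degree q = 2" by (simp_all add: q_def algebra_simps)
  have "x \<in> QPH z1 m1 m2"
  proof (rule QPH_intro)
    show "\<forall>i\<in>{1..4}. Fv x i \<noteq> (0, 0)" by (auto simp: x_def Fv_def)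
    show "\<forall>a\<in>{1,2}. \<forall>b\<in>{1,2}. polyle (Aent x a b) (mdeg m1 m2 a - mdeg m1 m2 b + 2)"
      using q by (auto simp: x_def Aent_def mdeg_def m polyle_def)
    fix i :: nat assume "i \<in> {1,2,3,4}"
    then consider "i = 1" | "i = 2" | "i = 3" | "i = 4" by blast
    then show "nilpotent2 (resid z1 m1 m2 x i) \<and>
        (\<forall>w\<in>line_of (Fv x i). mapply (resid z1 m1 m2 x i) w = (0, 0))"
    proof cases
      case 1
      then show ?thesis using q by (simp add: x_def Fv_def)
          (rule nilpotent_kernel_if_strictly_upper, simp_all add: resid_def Aent_def pt_def)
    next
      case 2
      then show ?thesis by (simp add: x_def Fv_def)
          (rule nilpotent_kernel_if_strictly_lower, simp_all add: resid_def Aent_def pt_def)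
    next
      case 3
      then show ?thesis using q by (simp add: x_def Fv_def)
          (rule nilpotent_kernel_if_strictly_upper, simp_all add: resid_def Aent_def pt_def)
    next
      case 4
      then show ?thesis by (simp add: x_def Fv_def) (rule nilpotent_kernel_if_strictly_lower,
          simp_all add: resid_def Aent_def mdeg_def topco_def m q_def eval_nat_numeral)
    qed
  qed
  moreover have "qA11 x * qA22 x - qA12 x * qA21 x \<noteq> 0" using q by (auto simp: x_def)
  ultimately show ?thesis unfolding QPH_Cstar_def by blast
qed

text \<open>The witness \<open>A = [[0, z(z - z\<^sub>1)(z - 1)], [-1, 0]]\<close> has strictly lower triangular residues at
  the finite marked points; at \<open>\<infinity>\<close> only the top coefficient of \<open>A\<^sub>1\<^sub>2\<close> (if \<open>m\<^sub>1 - m\<^sub>2 = 1\<close>) or of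
  \<open>A\<^sub>2\<^sub>1\<close> (if \<open>m\<^sub>1 - m\<^sub>2 = 2\<close>) survives.\<close>
lemma QPH_Cstar_nonempty_unbalanced:
  assumes z: "z1 \<noteq> 0" "z1 \<noteq> 1" and m: "m1 - m2 = 1 \<or> m1 - m2 = 2"
  shows "QPH_Cstar z1 m1 m2 \<noteq> {}"
proof -
  define c where "c = [:0, z1, -(1 + z1), 1:]"
  define x where "x = \<lparr>qF1 = (0, 1), qF2 = (0, 1), qF3 = (0, 1),
     qF4 = if m1 - m2 = 1 then (1, 0) else (0, 1), qA11 = 0, qA12 = c, qA21 = [:-1:], qA22 = 0\<rparr>"
  have c: "poly c z1 = 0" "poly c 1 = 0" "poly c 0 = 0" "degree c = 3"
    by (simp_all add: c_def algebra_simps power2_eq_square power3_eq_cube)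
  have "x \<in> QPH z1 m1 m2"
  proof (rule QPH_intro)
    show "\<forall>i\<in>{1..4}. Fv x i \<noteq> (0, 0)" by (auto simp: x_def Fv_def)
    show "\<forall>a\<in>{1,2}. \<forall>b\<in>{1,2}. polyle (Aent x a b) (mdeg m1 m2 a - mdeg m1 m2 b + 2)"
      using c m by (auto simp: x_def Aent_def mdeg_def polyle_def)
    fix i :: nat assume "i \<in> {1,2,3,4}"
    then consider "i \<in> {1,2,3}" | "i = 4" by blast
    then show "nilpotent2 (resid z1 m1 m2 x i) \<and>
        (\<forall>w\<in>line_of (Fv x i). mapply (resid z1 m1 m2 x i) w = (0, 0))"
    proof cases
      case 1
      then have "Fv x i = (0, 1)" by (auto simp: x_def Fv_def)
      moreover have "nilpotent2 (resid z1 m1 m2 x i) \<and>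
          (\<forall>w\<in>line_of (0, 1). mapply (resid z1 m1 m2 x i) w = (0, 0))"
        by (rule nilpotent_kernel_if_strictly_lower) (use 1 c in \<open>auto simp: resid_def Aent_def x_def pt_def\<close>)
      ultimately show ?thesis by simp
    next
      case 2
      show ?thesis
      proof (cases "m1 - m2 = 1")
        case True
        then have e: "m1 - m2 + 2 = 3" "m2 - m1 + 2 = 1" by auto
        show ?thesis using 2 True by (simp add: x_def Fv_def) (rule nilpotent_kernel_if_strictly_upper,
            simp_all add: resid_def Aent_def mdeg_def topco_def e c_def eval_nat_numeral)
      next
        case False
        then have e: "m1 - m2 + 2 = 4" "m2 - m1 + 2 = 0" using m by auto
        show ?thesis using 2 False by (simp add: x_def Fv_def) (rule nilpotent_kernel_if_strictly_lower,
            simp_all add: resid_def Aent_def mdeg_def topco_def e c_def eval_nat_numeral)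
      qed
    qed
  qed
  moreover have "qA11 x * qA22 x - qA12 x * qA21 x \<noteq> 0" using c by (auto simp: x_def)
  ultimately show ?thesis unfolding QPH_Cstar_def by blast
qed

lemma QPH_Cstar_nonempty:
  assumes "z1 \<noteq> 0" "z1 \<noteq> 1" "m2 \<le> m1" "m1 - m2 \<le> 2"
  shows "QPH_Cstar z1 m1 m2 \<noteq> {}"
proof (cases "m1 = m2")
  case True
  then show ?thesis by (rule QPH_Cstar_nonempty_balanced[OF assms(1,2)])
next
  case False
  then show ?thesis using assms by (intro QPH_Cstar_nonempty_unbalanced) auto
qed

theorem corollary6p1:
  fixes z1 :: complex and m1 m2 :: int
  assumes "z1 \<noteq> 0" and "z1 \<noteq> 1" and "m2 \<le> m1"
  shows "(m1 - m2 \<le> 2 \<longrightarrow>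
            (\<forall>\<beta>::nat \<Rightarrow> real. (\<forall>i\<in>{1..4}. 0 < \<beta> i \<and> \<beta> i < 1) \<longrightarrow>
               QPH_stable z1 m1 m2 \<beta> \<noteq> {} \<and>
               zariski_open_in (QPH z1 m1 m2) (QPH_stable z1 m1 m2 \<beta>) \<and>
               QPH_Cstar z1 m1 m2 \<subseteq> QPH_stable z1 m1 m2 \<beta>))
       \<and> (4 \<le> m1 - m2 \<longrightarrow>
            (\<forall>\<beta>::nat \<Rightarrow> real. (\<forall>i\<in>{1..4}. 0 \<le> \<beta> i \<and> \<beta> i < 1) \<longrightarrow>
               QPH_stable z1 m1 m2 \<beta> = {}))"
proof (intro conjI impI allI)
  fix \<beta> :: "nat \<Rightarrow> real"
  assume gap: "m1 - m2 \<le> 2" and \<beta>: "\<forall>i\<in>{1..4}. 0 < \<beta> i \<and> \<beta> i < 1"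
  have Cstar: "QPH_Cstar z1 m1 m2 \<subseteq> QPH_stable z1 m1 m2 \<beta>"
    using QPH_Cstar_beta_stable[OF assms(1,2)] by (auto simp: QPH_stable_def QPH_Cstar_def)
  then show "QPH_stable z1 m1 m2 \<beta> \<noteq> {}"
    using QPH_Cstar_nonempty[OF assms gap] by blast
  show "zariski_open_in (QPH z1 m1 m2) (QPH_stable z1 m1 m2 \<beta>)"
    using \<beta> by (intro QPH_stable_zariski_open[OF assms gap]) (simp add: less_imp_le)
  show "QPH_Cstar z1 m1 m2 \<subseteq> QPH_stable z1 m1 m2 \<beta>" by (rule Cstar)
next
  fix \<beta> :: "nat \<Rightarrow> real"
  assume "4 \<le> m1 - m2" "\<forall>i\<in>{1..4}. 0 \<le> \<beta> i \<and> \<beta> i < 1"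
  then show "QPH_stable z1 m1 m2 \<beta> = {}" by (rule QPH_stable_empty_if_gap_ge_4)
qed

end
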